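(* Let $\kappa>0$, $\epsilon>0$, and let $\theta_\epsilon$ be the phase function of a rescaled Néel wall. Then $\theta_\epsilon$ is smooth and: (i) $\theta_\epsilon(0)=0$, $\theta_\epsilon'\ge 0$ on $\mathbb{R}$, and $\theta_\epsilon'(0)>0$; (ii) $\theta_\epsilon'\in H^k(\mathbb{R})$ and $\cos\theta_\epsilon\in H^k(\mathbb{R})$ for all $k\in\mathbb{N}$; (iii) $-\frac{\pi}{2}\le\theta_\epsilon\le\frac{\pi}{2}$ and $\lim_{x\to\pm\infty}\theta_\epsilon(x)=\pm\frac{\pi}{2}$.
   Context: Fix $\kappa>0$, $\epsilon>0$. Let $\mathcal{S}_\epsilon[f]=\mathcal{F}^{-1}(\sigma_\epsilon\widehat f)$ with $\sigma_\epsilon(\xi)=1-\frac{1-e^{-\epsilon|\xi|}}{\epsilon|\xi|}$ and $\widehat u(\xi)=(2\pi)^{-1/2}\int e^{-ix\xi}u(x)\,dx$. A rescaled Néel wall is a minimizer $m_\epsilon=(m_1^\epsilon,m_2^\epsilon)$ of $E^\epsilon(m)=\kappa\int|m'|^2+\int m_1^2+\frac1\epsilon\int \mathcal{S}_\epsilon[m_1]m_1$ over the admissible set $\{m:\mathbb{R}\to S^1:\ m'\in L^2,\ m_1\in L^2,\ m_1(0)=1,\ \lim_{x\to\pm\infty}m_2(x)=\pm1\}$ (such minimizers exist). Standing facts used (from the literature): rescaled Néel walls are smooth weak solutions of the associated Euler–Lagrange equation, $m_1^\epsilon$ and $(m_2^\epsilon)'$ lie in $H^k$ for all $k$, and $m_1^\epsilon$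 is nonnegative and symmetrically decreasing. The phase function $\theta_\epsilon:\mathbb{R}\to\mathbb{R}$ is the smooth function with $\theta_\epsilon(0)=0$ and $m_\epsilon=(\cos\theta_\epsilon,\sin\theta_\epsilon)$; it solves $\kappa\theta''+\frac12\sin(2\theta)+\frac1\epsilon\mathcal{S}_\epsilon[\cos\theta]\sin\theta=0$. *)

theory Defs
  imports "HOL-Analysis.Analysis"
begin

definition L2 :: "(real \<Rightarrow> real) \<Rightarrow> bool" where
  "L2 f \<longleftrightarrow> f \<in> borel_measurable lborel \<and> integrable lborel (\<lambda>x. (f x)^2)"

definition L2c :: "(real \<Rightarrow> complex) \<Rightarrow> bool" where
  "L2c f \<longleftrightarrow> f \<in> borel_measurable lborel \<and> integrable lborel (\<lambda>x. (cmod (f x))^2)"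

definition smooth :: "(real \<Rightarrow> real) \<Rightarrow> bool" where
  "smooth f \<longleftrightarrow> (\<forall>n x. ((deriv ^^ n) f) differentiable (at x))"

definition test_fun :: "(real \<Rightarrow> real) \<Rightarrow> bool" where
  "test_fun \<phi> \<longleftrightarrow> smooth \<phi> \<and> bounded {x. \<phi> x \<noteq> 0}"

definition sobolev :: "nat \<Rightarrow> (real \<Rightarrow> real) \<Rightarrow> bool" where
  "sobolev k f \<longleftrightarrow>
     (\<exists>g :: nat \<Rightarrow> real \<Rightarrow> real.
        (\<forall>j\<le>k. L2 (g j)) \<and>
        (AE x in lborel. g 0 x = f x) \<and>
        (\<forall>j\<le>k. \<forall>\<phi>. test_fun \<phi> \<longrightarrow>
           (LINT x|lborel. g j x * \<phi> x) = (-1)^j * (LINT x|lborel. f x * (deriv ^^ j) \<phi> x)))"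

definition fourier_trunc :: "(real \<Rightarrow> complex) \<Rightarrow> real \<Rightarrow> real \<Rightarrow> complex" where
  "fourier_trunc f R \<xi> =
     complex_of_real (1 / sqrt (2 * pi)) *
       (LINT x:{-R..R}|lborel. exp (- \<i> * complex_of_real (x * \<xi>)) * f x)"

definition fourier_L2 :: "(real \<Rightarrow> complex) \<Rightarrow> (real \<Rightarrow> complex) \<Rightarrow> bool" where
  "fourier_L2 f g \<longleftrightarrow> L2c f \<and> L2c g \<and>
     ((\<lambda>R. LINT \<xi>|lborel. (cmod (fourier_trunc f R \<xi> - g \<xi>))^2) \<longlongrightarrow> 0) at_top"

definition sigma_eps :: "real \<Rightarrow> real \<Rightarrow> real" where
  "sigma_eps \<epsilon> \<xi> = (if \<xi> = 0 then 0 else 1 - (1 - exp (- \<epsilon> * \<bar>\<xi>\<bar>)) / (\<epsilon> * \<bar>\<xi>\<bar>))"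

text \<open>h = S_eps[f] = F^{-1}(sigma_eps * F f)  (determined up to null sets).\<close>
definition S_op :: "real \<Rightarrow> (real \<Rightarrow> real) \<Rightarrow> (real \<Rightarrow> complex) \<Rightarrow> bool" where
  "S_op \<epsilon> f h \<longleftrightarrow> (\<exists>g. fourier_L2 (\<lambda>x. complex_of_real (f x)) g \<and>
                        fourier_L2 h (\<lambda>\<xi>. complex_of_real (sigma_eps \<epsilon> \<xi>) * g \<xi>))"

text \<open>Admissible m = (m1, m2) : R -> S^1, with (weak) derivative d in L^2 (m is the
  integral of d), m1 in L^2, m1(0) = 1, m2(+-infinity) = +-1.\<close>
definition admissible :: "(real \<Rightarrow> real \<times> real) \<Rightarrow> (real \<Rightarrow> real \<times> real) \<Rightarrow> bool" where
  "admissible m d \<longleftrightarrow>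
     (\<forall>x. (fst (m x))^2 + (snd (m x))^2 = 1) \<and>
     L2 (\<lambda>x. fst (d x)) \<and> L2 (\<lambda>x. snd (d x)) \<and>
     (\<forall>a b. fst (m b) - fst (m a) = (LBINT t=a..b. fst (d t)) \<and>
            snd (m b) - snd (m a) = (LBINT t=a..b. snd (d t))) \<and>
     L2 (\<lambda>x. fst (m x)) \<and>
     fst (m 0) = 1 \<and>
     ((\<lambda>x. snd (m x)) \<longlongrightarrow> 1) at_top \<and>
     ((\<lambda>x. snd (m x)) \<longlongrightarrow> -1) at_bot"

definition nonlocal :: "real \<Rightarrow> (real \<Rightarrow> real) \<Rightarrow> real" where
  "nonlocal \<epsilon> f = (LINT x|lborel. Re ((SOME h. S_op \<epsilon> f h) x) * f x)"

definition energy :: "real \<Rightarrow> real \<Rightarrow> (real \<Rightarrow> real \<times> real) \<Rightarrow> (real \<Rightarrow> real \<times> real) \<Rightarrow> real" where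
  "energy \<kappa> \<epsilon> m d =
     \<kappa> * (LINT x|lborel. (norm (d x))^2) + (LINT x|lborel. (fst (m x))^2)
     + (1 / \<epsilon>) * nonlocal \<epsilon> (\<lambda>x. fst (m x))"

definition neel_wall :: "real \<Rightarrow> real \<Rightarrow> (real \<Rightarrow> real \<times> real) \<Rightarrow> bool" where
  "neel_wall \<kappa> \<epsilon> m \<longleftrightarrow>
     (\<exists>d. admissible m d \<and>
          (\<forall>m' d'. admissible m' d' \<longrightarrow> energy \<kappa> \<epsilon> m d \<le> energy \<kappa> \<epsilon> m' d'))"

end

theory Submission
  imports Defs "HOL-Computational_Algebra.Polynomial"
begin

text \<open>Since \<open>cos \<theta> = m\<^sub>1 \<ge> 0\<close> and \<open>\<theta>\<close> is continuous with \<open>\<theta> 0 = 0\<close>, \<open>\<theta>\<close> stays in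
  \<open>[-pi/2, pi/2]\<close>. There \<open>\<theta> = 2 arctan (sin \<theta> / (1 + cos \<theta>))\<close>, so \<open>\<theta>\<close> is smooth with
  \<open>\<theta>' = m\<^sub>1 m\<^sub>2' - m\<^sub>2 m\<^sub>1'\<close>; by the Leibniz rule and the bound
  \<open>f(x)\<^sup>2 \<le> f(0)\<^sup>2 + \<integral> f\<^sup>2 + f'\<^sup>2\<close>
  this lies in every \<open>H\<^sup>k\<close>, weak derivatives of smooth functions being classical ones by the
  fundamental lemma of the calculus of variations. As \<open>m\<^sub>1\<close> is even and decreasing on \<open>[0, \<infinity>)\<close>
  while \<open>m\<^sub>2 \<rightarrow> \<plusminus>1\<close>, \<open>\<theta>\<close> is nondecreasing with limits \<open>\<plusminus>pi/2\<close>. Finally, the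
  Euler-Lagrange equation gives \<open>\<bar>\<theta>''\<bar> \<le> q \<bar>\<theta>\<bar>\<close> with \<open>q\<close> locally integrable; if \<open>\<theta>'(0) = 0\<close>,
  the last zero of \<open>\<theta>\<close> on \<open>[0, \<infinity>)\<close> would be a double zero, and a Gronwall argument would make
  \<open>\<theta>\<close> vanish beyond it.\<close>

lemma funpow_deriv_Suc: "(deriv ^^ Suc n) f = (deriv ^^ n) (deriv f)"
  by (simp add: funpow_Suc_right del: funpow.simps)

lemma smooth_differentiable: "smooth f \<Longrightarrow> f differentiable (at x)"
  unfolding smooth_def by (metis funpow_0)

lemma smooth_deriv: "smooth f \<Longrightarrow> smooth (deriv f)"
  unfolding smooth_def by (metis funpow_deriv_Suc)

lemma smooth_higher_deriv: "smooth f \<Longrightarrow> smooth ((deriv ^^ n) f)"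
  by (induction n) (auto intro: smooth_deriv)

lemma smooth_has_real_derivative: "smooth f \<Longrightarrow> (f has_real_derivative deriv f x) (at x)"
  using smooth_differentiable DERIV_deriv_iff_real_differentiable by blast

lemma smooth_higher_deriv_has_real_derivative:
  "smooth f \<Longrightarrow> ((deriv ^^ n) f has_real_derivative (deriv ^^ Suc n) f x) (at x)"
  using smooth_has_real_derivative[OF smooth_higher_deriv] by simp

lemma smooth_continuous_on: "smooth f \<Longrightarrow> continuous_on S f"
  by (meson DERIV_isCont continuous_at_imp_continuous_on smooth_has_real_derivative)

lemma higher_deriv_eq_of_derivative_chain:
  assumes "\<And>n x. (F n has_real_derivative F (Suc n) x) (at x)"
  shows "(deriv ^^ n) (F 0) = F n"
proof (induction n)
  case (Suc n)
  have "deriv (F n) = F (Suc n)"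
    using DERIV_imp_deriv[OF assms] by (simp add: fun_eq_iff)
  then show ?case using Suc by simp
qed simp

lemma smooth_of_derivative_chain:
  assumes "\<And>n x. (F n has_real_derivative F (Suc n) x) (at x)"
  shows "smooth (F 0)"
  unfolding smooth_def using higher_deriv_eq_of_derivative_chain[of F] assms real_differentiable_def
  by metis

lemma smooth_const: "smooth (\<lambda>x. c)"
  using smooth_of_derivative_chain[of "\<lambda>n x. if n = 0 then c else 0"] by auto

lemma smooth_add: assumes "smooth f" "smooth g" shows "smooth (\<lambda>x. f x + g x)"
proof -
  have "((\<lambda>x. (deriv ^^ n) f x + (deriv ^^ n) g x) has_real_derivative
          (deriv ^^ Suc n) f x + (deriv ^^ Suc n) g x) (at x)" for n x
    using assms by (intro DERIV_add smooth_higher_deriv_has_real_derivative)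
  from smooth_of_derivative_chain[of "\<lambda>n x. (deriv ^^ n) f x + (deriv ^^ n) g x", OF this]
  show ?thesis by simp
qed

lemma smooth_minus: assumes "smooth f" shows "smooth (\<lambda>x. - f x)"
proof -
  have "((\<lambda>x. - (deriv ^^ n) f x) has_real_derivative - (deriv ^^ Suc n) f x) (at x)" for n x
    using assms by (intro DERIV_minus smooth_higher_deriv_has_real_derivative)
  from smooth_of_derivative_chain[of "\<lambda>n x. - (deriv ^^ n) f x", OF this] show ?thesis by simp
qed

lemma smooth_diff: "smooth f \<Longrightarrow> smooth g \<Longrightarrow> smooth (\<lambda>x. f x - g x)"
  using smooth_add[of f "\<lambda>x. - g x"] smooth_minus by simp

lemma higher_deriv_diff_smooth:
  assumes "smooth f" "smooth g"
  shows "(deriv ^^ n) (\<lambda>x. f x - g x) = (\<lambda>x. (deriv ^^ n) f x - (deriv ^^ n) g x)"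
proof -
  have "((\<lambda>x. (deriv ^^ n) f x - (deriv ^^ n) g x) has_real_derivative
          (deriv ^^ Suc n) f x - (deriv ^^ Suc n) g x) (at x)" for n x
    using assms by (intro DERIV_diff smooth_higher_deriv_has_real_derivative)
  from higher_deriv_eq_of_derivative_chain[of "\<lambda>n x. (deriv ^^ n) f x - (deriv ^^ n) g x", OF this]
   show ?thesis by simp
qed

lemma smooth_affine: assumes "smooth f" shows "smooth (\<lambda>x. f (a * x + b))"
proof -
  have "((\<lambda>x. a ^ n * (deriv ^^ n) f (a * x + b)) has_real_derivative
          a ^ Suc n * (deriv ^^ Suc n) f (a * x + b)) (at x)" for n x
  proof -
    have "((\<lambda>x. a * x + b) has_real_derivative a) (at x)" by (auto intro!: derivative_eq_intros)
    from DERIV_chain2[OF smooth_higher_deriv_has_real_derivative[OF assms] this]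
    show ?thesis by (auto intro!: derivative_eq_intros simp: algebra_simps)
  qed
  from smooth_of_derivative_chain[of "\<lambda>n x. a ^ n * (deriv ^^ n) f (a * x + b)", OF this]
  show ?thesis by simp
qed

lemma smooth_of_has_real_derivative:
  assumes "\<And>x. (f has_real_derivative g x) (at x)" and "smooth g"
  shows "smooth f"
proof -
  define F where "F n = (case n of 0 \<Rightarrow> f | Suc m \<Rightarrow> (deriv ^^ m) g)" for n
  have "(F n has_real_derivative F (Suc n) x) (at x)" for n x
    using assms smooth_higher_deriv_has_real_derivative[OF assms(2)]
    by (cases n) (auto simp: F_def simp del: funpow.simps)
  from smooth_of_derivative_chain[of F, OF this] show ?thesis by (simp add: F_def)
qed

lemma higher_deriv_mult_smooth:
  assumes "smooth f" "smooth g"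
  shows "(deriv ^^ n) (\<lambda>w. f w * g w) z =
           (\<Sum>i = 0..n. real (n choose i) * (deriv ^^ i) f z * (deriv ^^ (n - i)) g z)"
proof (induction n arbitrary: z)
  case (Suc n z)
  have df: "\<And>n. ((deriv ^^ n) f has_field_derivative deriv ((deriv ^^ n) f) z) (at z)"
    and dg: "\<And>n. ((deriv ^^ n) g has_field_derivative deriv ((deriv ^^ n) g) z) (at z)"
    using assms smooth_has_real_derivative smooth_higher_deriv by blast+
  have choose_Suc: "Suc n choose k = (n choose k) + (if k = 0 then 0 else n choose (k - 1))" for k
    by (cases k) simp_all
  have pascal: "(\<Sum>i = 0..n. real (n choose i) * (deriv ((deriv ^^ i) f) z * (deriv ^^ (n - i)) g z
                    + deriv ((deriv ^^ (n - i)) g) z * (deriv ^^ i) f z)) =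
      g z * deriv ((deriv ^^ n) f) z
      + (\<Sum>i = 0..n. (deriv ^^ i) f z * (real (Suc n choose i) * (deriv ^^ (Suc n - i)) g z))"
    apply (simp add: choose_Suc algebra_simps sum.distrib)
    apply (subst (4) sum_Suc_reindex)
    apply (auto simp: algebra_simps Suc_diff_le intro: sum.cong)
    done
  have "((deriv ^^ n) (\<lambda>w. f w * g w) has_field_derivative
         (\<Sum>i = 0..Suc n. real (Suc n choose i) * (deriv ^^ i) f z * (deriv ^^ (Suc n - i)) g z)) (at z)"
    apply (rule has_field_derivative_transform_within_open[of
          "\<lambda>w. \<Sum>i = 0..n. real (n choose i) * (deriv ^^ i) f w * (deriv ^^ (n - i)) g w" _ _ UNIV])
       apply (simp add: algebra_simps)
       apply (rule derivative_eq_intros | simp)+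
           apply (auto intro: DERIV_mult df dg Suc.IH [symmetric])
    by (metis (no_types, lifting) mult.commute sum.cong pascal)
  then show ?case
    unfolding funpow.simps o_apply by (simp add: DERIV_imp_deriv)
qed simp

lemma smooth_mult: assumes "smooth f" "smooth g" shows "smooth (\<lambda>x. f x * g x)"
  unfolding smooth_def
proof (intro allI)
  fix n x
  have "(\<lambda>x. \<Sum>i = 0..n. real (n choose i) * (deriv ^^ i) f x * (deriv ^^ (n - i)) g x)
          differentiable (at x)"
    using assms unfolding smooth_def by (intro differentiable_sum ballI differentiable_mult) auto
  then show "(deriv ^^ n) (\<lambda>x. f x * g x) differentiable (at x)"
    using higher_deriv_mult_smooth[OF assms] by presburger
qed

text \<open>\<open>flat n\<close> is the \<open>n\<close>-th derivative of \<open>x \<mapsto> exp (-1/x)\<close> (extended by \<open>0\<close> to \<open>x \<le> 0\<close>);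
  on \<open>x > 0\<close> it has the form \<open>p (1/x) exp (-1/x)\<close> for the polynomials \<open>p = flat_poly n\<close>.\<close>

definition flat_poly :: "nat \<Rightarrow> real poly" where
  "flat_poly n = ((\<lambda>p. [:0, 0, 1:] * (p - pderiv p)) ^^ n) 1"

definition flat :: "nat \<Rightarrow> real \<Rightarrow> real" where
  "flat n x = (if x > 0 then poly (flat_poly n) (1 / x) * exp (- 1 / x) else 0)"

lemma flat_0: "flat 0 x = (if x > 0 then exp (- 1 / x) else 0)"
  by (simp add: flat_def flat_poly_def)

lemma poly_div_exp_tendsto_0: "((\<lambda>y::real. poly q y / exp y) \<longlongrightarrow> 0) at_top"
proof -
  have "((\<lambda>y::real. \<Sum>i\<le>degree q. coeff q i * (y ^ i / exp y))
          \<longlongrightarrow> (\<Sum>i\<le>degree q. coeff q i * 0)) at_top"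
    by (intro tendsto_sum tendsto_mult tendsto_const tendsto_power_div_exp_0)
  then show ?thesis by (simp add: poly_altdef sum_divide_distrib)
qed

lemma flat_div_tendsto_0: "((\<lambda>h. flat n h / h) \<longlongrightarrow> 0) (at_right 0)"
proof -
  have "((\<lambda>h. poly (pCons 0 (flat_poly n)) (inverse h) / exp (inverse h)) \<longlongrightarrow> 0) (at_right 0)"
    by (rule filterlim_compose[OF poly_div_exp_tendsto_0 filterlim_inverse_at_top_right])
  moreover have "\<forall>\<^sub>F h in at_right 0.
      poly (pCons 0 (flat_poly n)) (inverse h) / exp (inverse h) = flat n h / h"
    unfolding eventually_at_filter
    by (rule always_eventually) (auto simp: flat_def exp_minus divide_inverse)
  ultimately show ?thesis by (rule Lim_transform_eventually)
qed

lemma has_real_derivative_flat: "(flat n has_real_derivative flat (Suc n) x) (at x)"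
proof -
  consider "x > 0" | "x < 0" | "x = 0" by linarith
  then show ?thesis
  proof cases
    case 1
    have "((\<lambda>x. poly p (1 / x) * exp (- 1 / x)) has_real_derivative
            poly ([:0, 0, 1:] * (p - pderiv p)) (1 / x) * exp (- 1 / x)) (at x)" for p
    proof -
      have "((\<lambda>x. poly p (1 / x) * exp (- 1 / x)) has_real_derivative
          poly (pderiv p) (1 / x) * (- 1 / x^2) * exp (- 1 / x)
          + poly p (1 / x) * (exp (- 1 / x) * (1 / x^2))) (at x)"
        using 1 by (auto intro!: derivative_eq_intros DERIV_chain2[OF poly_DERIV]
            simp: power2_eq_square field_simps)
      then show ?thesis by (simp add: algebra_simps power2_eq_square field_simps)
    qed
    then have "((\<lambda>x. poly (flat_poly n) (1 / x) * exp (- 1 / x)) has_real_derivative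
                 flat (Suc n) x) (at x)"
      using 1 by (simp add: flat_def flat_poly_def)
    then show ?thesis
      by (rule has_field_derivative_transform_within_open[where S="{0<..}"])
        (use 1 in \<open>auto simp: flat_def\<close>)
  next
    case 2
    have "((\<lambda>x. 0) has_real_derivative flat (Suc n) x) (at x)" using 2 by (simp add: flat_def)
    then show ?thesis
      by (rule has_field_derivative_transform_within_open[where S="{..<0}"])
        (use 2 in \<open>auto simp: flat_def\<close>)
  next
    case 3
    have "((\<lambda>h. (flat n (0 + h) - flat n 0) / h) \<longlongrightarrow> 0) (at 0)"
      unfolding filterlim_at_split
    proof
      show "((\<lambda>h. (flat n (0 + h) - flat n 0) / h) \<longlongrightarrow> 0) (at_left 0)"
        by (rule Lim_transform_eventually[OF tendsto_const])
          (auto simp: eventually_at_filter flat_def)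
      show "((\<lambda>h. (flat n (0 + h) - flat n 0) / h) \<longlongrightarrow> 0) (at_right 0)"
        using flat_div_tendsto_0[of n] by (simp add: flat_def)
    qed
    then show ?thesis using 3 by (simp add: DERIV_def flat_def)
  qed
qed

lemma smooth_flat: "smooth (flat 0)"
  by (rule smooth_of_derivative_chain[of flat, OF has_real_derivative_flat])

definition hump :: "real \<Rightarrow> real" where
  "hump x = flat 0 x * flat 0 (1 - x)"

lemma smooth_hump: "smooth hump"
  using smooth_mult[OF smooth_affine[OF smooth_flat, of 1 0] smooth_affine[OF smooth_flat, of "-1" 1]]
  by (simp add: hump_def[abs_def])

lemma hump_nonneg: "hump x \<ge> 0"
  by (simp add: hump_def flat_0)

lemma hump_eq_0: "x \<le> 0 \<or> 1 \<le> x \<Longrightarrow> hump x = 0"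
  by (auto simp: hump_def flat_0)

lemma hump_pos: "0 < x \<Longrightarrow> x < 1 \<Longrightarrow> hump x > 0"
  by (simp add: hump_def flat_0)

definition hump_primitive :: "real \<Rightarrow> real" where
  "hump_primitive x = integral {-1..x} hump"

lemma hump_primitive_eq_0: "x \<le> 0 \<Longrightarrow> hump_primitive x = 0"
proof -
  assume "x \<le> 0"
  then have "integral {-1..x} hump = integral {-1..x} (\<lambda>_. 0)"
    by (intro integral_cong) (auto intro: hump_eq_0)
  then show ?thesis by (simp add: hump_primitive_def)
qed

lemma has_real_derivative_hump_primitive: "(hump_primitive has_real_derivative hump x) (at x)"
proof (cases "x < 0")
  case True
  have "((\<lambda>x. 0) has_real_derivative hump x) (at x)"
    using True by (simp add: hump_eq_0)
  then show ?thesis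
    by (rule has_field_derivative_transform_within_open[where S="{..<0}"])
      (use True in \<open>auto simp: hump_primitive_eq_0\<close>)
next
  case False
  have "(hump_primitive has_real_derivative hump x) (at x within {-1..x+1})"
    unfolding hump_primitive_def using False
    by (intro integral_has_real_derivative smooth_continuous_on smooth_hump) auto
  moreover have "at x within {-1..x+1} = at x"
    using False by (intro at_within_open_subset[where S="{-1<..<x+1}"]) auto
  ultimately show ?thesis by simp
qed

lemma hump_primitive_mono: "x \<le> y \<Longrightarrow> hump_primitive x \<le> hump_primitive y"
  using DERIV_nonneg_imp_nondecreasing has_real_derivative_hump_primitive hump_nonneg by blast

lemma hump_primitive_eq_1: "1 \<le> x \<Longrightarrow> hump_primitive x = hump_primitive 1"
proof -
  assume "1 \<le> x"
  have "integral {-1..1} hump + integral {1..x} hump = integral {-1..x} hump"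
    using \<open>1 \<le> x\<close>
    by (intro Henstock_Kurzweil_Integration.integral_combine)
      (auto intro: integrable_continuous_real smooth_continuous_on smooth_hump)
  moreover have "integral {1..x} hump = integral {1..x} (\<lambda>_. 0)"
    by (intro integral_cong) (auto intro: hump_eq_0)
  ultimately show ?thesis by (simp add: hump_primitive_def)
qed

lemma hump_primitive_1_pos: "hump_primitive 1 > 0"
proof -
  obtain z where z: "0 < z" "z < 1" "hump_primitive 1 - hump_primitive 0 = (1 - 0) * hump z"
    using MVT2[of 0 1 hump_primitive hump] has_real_derivative_hump_primitive by force
  then show ?thesis using hump_pos[of z] by (simp add: hump_primitive_eq_0)
qed

definition ramp :: "real \<Rightarrow> real" where
  "ramp x = hump_primitive x / hump_primitive 1"

lemma smooth_ramp: "smooth ramp"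
proof -
  have "smooth hump_primitive"
    by (rule smooth_of_has_real_derivative[OF has_real_derivative_hump_primitive smooth_hump])
  then have "smooth (\<lambda>x. hump_primitive x * (1 / hump_primitive 1))"
    by (intro smooth_mult smooth_const)
  then show ?thesis by (simp add: ramp_def[abs_def])
qed

lemma ramp_eq_0: "x \<le> 0 \<Longrightarrow> ramp x = 0"
  unfolding ramp_def by (subst hump_primitive_eq_0) auto

lemma ramp_eq_1: "1 \<le> x \<Longrightarrow> ramp x = 1"
  unfolding ramp_def using hump_primitive_1_pos by (subst hump_primitive_eq_1) auto

lemma ramp_bounds: "0 \<le> ramp x" "ramp x \<le> 1"
proof -
  have "0 \<le> hump_primitive x"
    using hump_primitive_mono[of 0 x] hump_primitive_eq_0[of x] hump_primitive_eq_0[of 0]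
    by (cases "x \<le> 0") auto
  moreover have "hump_primitive x \<le> hump_primitive 1"
    using hump_primitive_mono[of x 1] hump_primitive_eq_1[of x] by (cases "x \<le> 1") auto
  ultimately show "0 \<le> ramp x" "ramp x \<le> 1"
    using hump_primitive_1_pos by (auto simp: ramp_def)
qed

definition plateau :: "real \<Rightarrow> real \<Rightarrow> real \<Rightarrow> real \<Rightarrow> real" where
  "plateau a b \<delta> x = ramp ((x - a) / \<delta> + 1) * ramp ((b - x) / \<delta> + 1)"

lemma smooth_plateau: "smooth (plateau a b \<delta>)"
proof -
  have "smooth (\<lambda>x. ramp ((1 / \<delta>) * x + (1 - a / \<delta>)) * ramp ((- 1 / \<delta>) * x + (b / \<delta> + 1)))"
    by (intro smooth_mult smooth_affine smooth_ramp)
  moreover have "plateau a b \<delta> = (\<lambda>x. ramp ((1 / \<delta>) * x + (1 - a / \<delta>)) * ramp ((- 1 / \<delta>) * x + (b / \<delta> + 1)))"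
    by (auto simp: fun_eq_iff plateau_def diff_divide_distrib algebra_simps)
  ultimately show ?thesis by simp
qed

lemma plateau_outside:
  assumes "\<delta> > 0" "x < a - \<delta> \<or> b + \<delta> < x"
  shows "plateau a b \<delta> x = 0"
proof -
  have "(x - a) / \<delta> + 1 \<le> 0 \<or> (b - x) / \<delta> + 1 \<le> 0"
    using assms by (auto simp: field_simps)
  then show ?thesis by (auto simp: plateau_def ramp_eq_0)
qed

lemma plateau_inside: "\<delta> > 0 \<Longrightarrow> a \<le> x \<Longrightarrow> x \<le> b \<Longrightarrow> plateau a b \<delta> x = 1"
  by (simp add: plateau_def ramp_eq_1)

lemma plateau_bounds: "\<bar>plateau a b \<delta> x\<bar> \<le> 1"
  using ramp_bounds by (simp add: plateau_def abs_mult mult_le_one)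

lemma plateau_tendsto_indicator:
  "(\<lambda>n. plateau a b (1 / Suc n) x) \<longlonglongrightarrow> indicator {a..b} x"
proof (cases "a \<le> x \<and> x \<le> b")
  case True
  then show ?thesis by (simp add: plateau_inside indicator_def)
next
  case False
  have "\<exists>e>0. x < a - e \<or> b + e < x"
  proof (cases "x < a")
    case True
    then show ?thesis by (intro exI[of _ "(a - x) / 2"]) (auto simp: field_simps)
  next
    case False
    then have "b < x" using \<open>\<not> (a \<le> x \<and> x \<le> b)\<close> by auto
    then show ?thesis by (intro exI[of _ "(x - b) / 2"]) (auto simp: field_simps)
  qed
  then obtain e where e: "e > 0" "x < a - e \<or> b + e < x" by blast
  obtain N where N: "1 / Suc N < e" using e(1) nat_approx_posE by blast
  have "\<forall>\<^sub>F n in sequentially. plateau a b (1 / Suc n) x = 0"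
    unfolding eventually_sequentially
  proof (intro exI allI impI)
    fix n assume "N \<le> n"
    then have "1 / real (Suc n) \<le> 1 / Suc N" by (intro divide_left_mono) auto
    then have "1 / real (Suc n) < e" using N by linarith
    then show "plateau a b (1 / Suc n) x = 0" using e by (intro plateau_outside) auto
  qed
  moreover have "indicator {a..b} x = (0::real)" using False by auto
  ultimately show ?thesis by (simp add: tendsto_eventually)
qed

lemma test_fun_vanishes_outside:
  assumes "test_fun \<phi>"
  obtains B where "B \<ge> 0" "\<And>x. \<bar>x\<bar> > B \<Longrightarrow> \<phi> x = 0"
proof -
  obtain B where "\<And>x. \<phi> x \<noteq> 0 \<Longrightarrow> \<bar>x\<bar> \<le> B"
    using assms unfolding test_fun_def bounded_real by blast
  then show ?thesis using that[of "max B 0"] by force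
qed

lemma deriv_vanishes_outside:
  fixes f :: "real \<Rightarrow> real"
  assumes "\<And>x. \<bar>x\<bar> > B \<Longrightarrow> f x = 0" "\<bar>x\<bar> > B"
  shows "deriv f x = 0"
proof -
  have "open {y::real. B < \<bar>y\<bar>}" by (rule open_Collect_less) (auto intro: continuous_intros)
  then have "(f has_real_derivative 0) (at x)"
    by (intro has_field_derivative_transform_within_open[OF DERIV_const, where S="{y. \<bar>y\<bar> > B}"])
      (use assms in auto)
  then show ?thesis by (rule DERIV_imp_deriv)
qed

lemma test_fun_deriv: assumes "test_fun \<phi>" shows "test_fun (deriv \<phi>)"
proof -
  obtain B where B: "\<And>x. \<bar>x\<bar> > B \<Longrightarrow> \<phi> x = 0" using test_fun_vanishes_outside[OF assms] by blast
  have "{x. deriv \<phi> x \<noteq> 0} \<subseteq> {-B..B}" using deriv_vanishes_outside[of B \<phi>, OF B] by force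
  then have "bounded {x. deriv \<phi> x \<noteq> 0}" by (rule bounded_subset[OF bounded_closed_interval])
  then show ?thesis using assms smooth_deriv unfolding test_fun_def by blast
qed

lemma test_fun_plateau: "\<delta> > 0 \<Longrightarrow> test_fun (plateau a b \<delta>)"
  unfolding test_fun_def
proof
  assume "\<delta> > 0"
  show "smooth (plateau a b \<delta>)" by (rule smooth_plateau)
  have "{x. plateau a b \<delta> x \<noteq> 0} \<subseteq> {a - \<delta> .. b + \<delta>}" using plateau_outside[OF \<open>\<delta> > 0\<close>] by force
  then show "bounded {x. plateau a b \<delta> x \<noteq> 0}" by (rule bounded_subset[OF bounded_closed_interval])
qed

lemma
  fixes g :: "real \<Rightarrow> real"
  assumes cont: "continuous_on UNIV g" and vanish: "\<And>x. x \<notin> {a..b} \<Longrightarrow> g x = 0"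
  shows integrable_vanishing_outside_interval: "integrable lborel g"
    and lborel_integral_eq_interval_integral: "(LINT x|lborel. g x) = integral {a..b} g"
proof -
  have si: "set_integrable lborel {a..b} g"
    by (rule borel_integrable_atLeastAtMost'[OF continuous_on_subset[OF cont]]) simp
  have eq: "(\<lambda>x. indicator {a..b} x *\<^sub>R g x) = g" using vanish by (auto simp: fun_eq_iff indicator_def)
  show "integrable lborel g" using si unfolding set_integrable_def eq .
  have "(LINT x|lborel. g x) = (LINT x:{a..b}|lborel. g x)" unfolding set_lebesgue_integral_def eq ..
  also have "\<dots> = integral {a..b} g" by (rule set_borel_integral_eq_integral(2)[OF si])
  finally show "(LINT x|lborel. g x) = integral {a..b} g" .
qed

lemma integrable_continuous_mult_test_fun:
  assumes "continuous_on UNIV F" "test_fun \<phi>" shows "integrable lborel (\<lambda>x. F x * \<phi> x)"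
proof -
  obtain B where B: "\<And>x. \<bar>x\<bar> > B \<Longrightarrow> \<phi> x = 0" using test_fun_vanishes_outside[OF assms(2)] by blast
  show ?thesis
    by (rule integrable_vanishing_outside_interval[of _ "-B" B])
      (use assms B in \<open>auto intro: continuous_intros smooth_continuous_on simp: test_fun_def\<close>)
qed

lemma integration_by_parts_test_fun:
  assumes F: "smooth F" and \<phi>: "test_fun \<phi>"
  shows "(LINT x|lborel. deriv F x * \<phi> x) = - (LINT x|lborel. F x * deriv \<phi> x)"
proof -
  obtain B where B: "B \<ge> 0" "\<And>x. \<bar>x\<bar> > B \<Longrightarrow> \<phi> x = 0" using test_fun_vanishes_outside[OF \<phi>] by blast
  have sphi: "smooth \<phi>" using \<phi> unfolding test_fun_def by blast
  have dB: "\<And>x. \<bar>x\<bar> > B \<Longrightarrow> deriv \<phi> x = 0" using deriv_vanishes_outside[of B \<phi>, OF B(2)] by blast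
  let ?a = "- (B + 1)" and ?b = "B + 1"
  have out: "x \<notin> {?a..?b} \<Longrightarrow> \<bar>x\<bar> > B" for x by auto
  have c1: "continuous_on UNIV (\<lambda>x. deriv F x * \<phi> x)"
    by (intro continuous_intros smooth_continuous_on smooth_deriv F sphi)
  have c2: "continuous_on UNIV (\<lambda>x. F x * deriv \<phi> x)"
    by (intro continuous_intros smooth_continuous_on smooth_deriv F sphi)
  have "((\<lambda>x. deriv F x * \<phi> x + F x * deriv \<phi> x) has_integral (F ?b * \<phi> ?b - F ?a * \<phi> ?a)) {?a..?b}"
  proof (rule fundamental_theorem_of_calculus)
    fix x
    have "((\<lambda>x. F x * \<phi> x) has_real_derivative deriv F x * \<phi> x + F x * deriv \<phi> x) (at x)"
      using DERIV_mult[OF smooth_has_real_derivative[OF F] smooth_has_real_derivative[OF sphi]]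
      by (simp add: mult.commute)
    then show "((\<lambda>x. F x * \<phi> x) has_vector_derivative deriv F x * \<phi> x + F x * deriv \<phi> x)
        (at x within {?a..?b})"
      by (simp add: has_real_derivative_iff_has_vector_derivative has_vector_derivative_at_within)
  qed (use B in auto)
  then have "integral {?a..?b} (\<lambda>x. deriv F x * \<phi> x) + integral {?a..?b} (\<lambda>x. F x * deriv \<phi> x) = 0"
    using B c1 c2
    by (subst integral_add[symmetric]) (auto intro: integrable_continuous_interval continuous_on_subset
        dest: integral_unique)
  moreover have "(LINT x|lborel. deriv F x * \<phi> x) = integral {?a..?b} (\<lambda>x. deriv F x * \<phi> x)"
    by (rule lborel_integral_eq_interval_integral[OF c1]) (use B(2) out in auto)
  moreover have "(LINT x|lborel. F x * deriv \<phi> x) = integral {?a..?b} (\<lambda>x. F x * deriv \<phi> x)"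
    by (rule lborel_integral_eq_interval_integral[OF c2]) (use dB out in auto)
  ultimately show ?thesis by simp
qed

lemma integration_by_parts_higher_test_fun:
  assumes "smooth F" and "test_fun \<phi>"
  shows "(LINT x|lborel. (deriv ^^ j) F x * \<phi> x) = (-1)^j * (LINT x|lborel. F x * (deriv ^^ j) \<phi> x)"
  using assms(2)
proof (induction j arbitrary: \<phi>)
  case (Suc j)
  have "(LINT x|lborel. (deriv ^^ Suc j) F x * \<phi> x) = - (LINT x|lborel. (deriv ^^ j) F x * deriv \<phi> x)"
    using integration_by_parts_test_fun[OF smooth_higher_deriv[OF assms(1)] Suc.prems] by simp
  also have "\<dots> = (-1)^Suc j * (LINT x|lborel. F x * (deriv ^^ Suc j) \<phi> x)"
    using Suc.IH[OF test_fun_deriv[OF Suc.prems]] by (simp only: funpow_deriv_Suc) simp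
  finally show ?case .
qed simp

lemma integrable_mult_indicator_of_square_integrable:
  fixes f :: "real \<Rightarrow> real"
  assumes f: "f \<in> borel_measurable lborel" and f2: "integrable lborel (\<lambda>x. (f x)^2)"
  shows "integrable lborel (\<lambda>x. f x * indicator {a..b} x)"
proof (rule Bochner_Integration.integrable_bound)
  show "integrable lborel (\<lambda>x. indicator {a..b} x + (f x)^2 :: real)"
    using f2 by (intro Bochner_Integration.integrable_add integrable_real_indicator)
      (auto simp: emeasure_lborel_Icc_eq)
  show "AE x in lborel. norm (f x * indicator {a..b} x) \<le> norm (indicator {a..b} x + (f x)^2 :: real)"
  proof (rule AE_I2)
    fix x
    have "0 \<le> (\<bar>f x\<bar> - 1)^2" by simp
    then have "\<bar>f x\<bar> \<le> 1 + (f x)^2" by (simp add: power2_diff)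
    then show "norm (f x * indicator {a..b} x) \<le> norm (indicator {a..b} x + (f x)^2 :: real)"
      by (auto simp: indicator_def)
  qed
qed (use f in measurable)

lemma emeasure_density_greaterThan:
  fixes R :: "real \<Rightarrow> real"
  assumes [measurable]: "R \<in> borel_measurable lborel"
    and "\<And>y. R y \<ge> 0" and "integrable lborel (\<lambda>y. R y * indicator {x<..} y)"
  shows "emeasure (density lborel R) {x<..} = ennreal (LINT y|lborel. R y * indicator {x<..} y)"
proof -
  have "emeasure (density lborel R) {x<..} = (\<integral>\<^sup>+ y. ennreal (R y) * indicator {x<..} y \<partial>lborel)"
    by (rule emeasure_density) measurable
  also have "\<dots> = (\<integral>\<^sup>+ y. ennreal (R y * indicator {x<..} y) \<partial>lborel)"
    by (intro nn_integral_cong) (auto simp: indicator_def)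
  also have "\<dots> = ennreal (LINT y|lborel. R y * indicator {x<..} y)"
    using assms by (intro nn_integral_eq_integral) auto
  finally show ?thesis .
qed

text \<open>The half-lines \<open>{x<..}\<close> generate the Borel sets, so the positive and negative parts of \<open>f\<close> are
  the densities of one and the same measure.\<close>

lemma AE_zero_of_integrals_greaterThan_zero:
  fixes f :: "real \<Rightarrow> real"
  assumes f: "integrable lborel f" and zero: "\<And>x. (LINT y|lborel. f y * indicator {x<..} y) = 0"
  shows "AE y in lborel. f y = 0"
proof -
  define P where "P y = max (f y) 0" for y
  define Q where "Q y = max (- f y) 0" for y
  have [measurable]: "f \<in> borel_measurable lborel" using f by blast
  have [measurable]: "P \<in> borel_measurable lborel" "Q \<in> borel_measurable lborel"
    unfolding P_def Q_def by measurable
  have PQ: "integrable lborel (\<lambda>y. P y * indicator {x<..} y)"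
    "integrable lborel (\<lambda>y. Q y * indicator {x<..} y)" for x
    unfolding P_def Q_def
    by (intro integrable_real_mult_indicator integrable_max integrable_minus f; simp)+
  have "density lborel P = density lborel Q"
  proof (rule measure_eqI_lessThan)
    fix x
    have "(LINT y|lborel. P y * indicator {x<..} y) - (LINT y|lborel. Q y * indicator {x<..} y)
        = (LINT y|lborel. P y * indicator {x<..} y - Q y * indicator {x<..} y)"
      using PQ[of x] by (intro Bochner_Integration.integral_diff[symmetric])
    also have "\<dots> = (LINT y|lborel. f y * indicator {x<..} y)"
      by (intro Bochner_Integration.integral_cong) (auto simp: P_def Q_def max_def)
    finally have "(LINT y|lborel. P y * indicator {x<..} y) - (LINT y|lborel. Q y * indicator {x<..} y)
        = (LINT y|lborel. f y * indicator {x<..} y)" .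
    then show "emeasure (density lborel P) {x<..} = emeasure (density lborel Q) {x<..}"
      using zero[of x] PQ[of x] by (simp add: emeasure_density_greaterThan P_def Q_def)
    show "emeasure (density lborel P) {x<..} < \<infinity>"
      using PQ[of x] by (simp add: emeasure_density_greaterThan P_def)
  qed simp_all
  then have "AE y in lborel. ennreal (P y) = ennreal (Q y)"
    by (intro sigma_finite_measure.density_unique[OF sigma_finite_lborel]) auto
  then show ?thesis
    by eventually_elim (auto simp: P_def Q_def max_def split: if_splits)
qed

lemma AE_zero_of_interval_integrals_zero:
  fixes D :: "real \<Rightarrow> real"
  assumes [measurable]: "D \<in> borel_measurable lborel"
    and local_int: "\<And>a b. integrable lborel (\<lambda>x. D x * indicator {a..b} x)"
    and zero: "\<And>a b. (LINT x|lborel. D x * indicator {a..b} x) = 0"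
  shows "AE x in lborel. D x = 0"
proof -
  have "AE y in lborel. D y * indicator {- real N..real N} y = 0" for N :: nat
  proof (rule AE_zero_of_integrals_greaterThan_zero[OF local_int])
    fix x
    have "(LINT y|lborel. D y * indicator {- real N..real N} y * indicator {x<..} y)
        = (LINT y|lborel. D y * indicator {max x (- real N)..real N} y)"
      using AE_lborel_singleton[of x]
      by (intro integral_cong_AE; (measurable | eventually_elim)) (auto simp: indicator_def)
    then show "(LINT y|lborel. D y * indicator {- real N..real N} y * indicator {x<..} y) = 0"
      using zero by simp
  qed
  then have "AE y in lborel. \<forall>N::nat. D y * indicator {- real N..real N} y = 0"
    unfolding AE_all_countable by blast
  then show ?thesis
  proof eventually_elim
    case (elim y)
    obtain N :: nat where "\<bar>y\<bar> \<le> real N" using real_arch_simple by blast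
    then show "D y = 0" using elim[rule_format, of N] by (auto simp: indicator_def)
  qed
qed

lemma AE_zero_of_test_fun_integrals_zero:
  fixes D :: "real \<Rightarrow> real"
  assumes [measurable]: "D \<in> borel_measurable lborel"
    and local_int: "\<And>a b. integrable lborel (\<lambda>x. D x * indicator {a..b} x)"
    and zero: "\<And>\<phi>. test_fun \<phi> \<Longrightarrow> (LINT x|lborel. D x * \<phi> x) = 0"
  shows "AE x in lborel. D x = 0"
proof (rule AE_zero_of_interval_integrals_zero[OF _ local_int])
  fix a b :: real
  define w where "w x = \<bar>D x\<bar> * indicator {a - 1..b + 1} x" for x
  have [measurable]: "plateau a b \<delta> \<in> borel_measurable lborel" for \<delta>
    using borel_measurable_continuous_onI[OF smooth_continuous_on[OF smooth_plateau]] by simp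
  have "(\<lambda>n. LINT x|lborel. D x * plateau a b (1 / Suc n) x) \<longlonglongrightarrow> (LINT x|lborel. D x * indicator {a..b} x)"
  proof (rule integral_dominated_convergence[where w=w])
    show "integrable lborel w"
      unfolding w_def using integrable_abs[OF local_int[of "a - 1" "b + 1"]]
      by (simp add: abs_mult)
    show "AE x in lborel. (\<lambda>n. D x * plateau a b (1 / Suc n) x) \<longlonglongrightarrow> D x * indicator {a..b} x"
      by (intro AE_I2 tendsto_mult tendsto_const plateau_tendsto_indicator)
    fix n
    have "plateau a b (1 / Suc n) x = 0" if "x \<notin> {a - 1..b + 1}" for x
    proof (rule plateau_outside)
      have "1 / real (Suc n) \<le> 1" by simp
      moreover have "x < a - 1 \<or> b + 1 < x" using that by auto
      ultimately show "x < a - 1 / real (Suc n) \<or> b + 1 / real (Suc n) < x" by linarith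
    qed simp
    then show "AE x in lborel. norm (D x * plateau a b (1 / Suc n) x) \<le> w x"
      using plateau_bounds[of a b "1 / Suc n"]
      by (intro AE_I2) (auto simp: w_def abs_mult indicator_def intro: mult_left_le)
  qed measurable
  moreover have "(LINT x|lborel. D x * plateau a b (1 / Suc n) x) = 0" for n
    by (intro zero test_fun_plateau) simp
  ultimately show "(LINT x|lborel. D x * indicator {a..b} x) = 0"
    by (simp add: LIMSEQ_const_iff)
qed simp

lemma integrable_square_integrable_mult_test_fun:
  assumes "L2 g" "test_fun \<phi>" shows "integrable lborel (\<lambda>x. g x * \<phi> x)"
proof (rule Bochner_Integration.integrable_bound)
  have "integrable lborel (\<lambda>x. \<phi> x * \<phi> x)"
    using assms(2) smooth_continuous_on
    by (intro integrable_continuous_mult_test_fun) (auto simp: test_fun_def)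
  then show "integrable lborel (\<lambda>x. (g x)^2 + (\<phi> x)^2)"
    using assms(1) unfolding L2_def by (auto simp: power2_eq_square)
  show "AE x in lborel. norm (g x * \<phi> x) \<le> norm ((g x)^2 + (\<phi> x)^2)"
  proof (rule AE_I2)
    fix x
    have "0 \<le> (\<bar>g x\<bar> - \<bar>\<phi> x\<bar>)^2" by simp
    then have "2 * (\<bar>g x\<bar> * \<bar>\<phi> x\<bar>) \<le> (g x)^2 + (\<phi> x)^2" by (simp add: power2_diff)
    moreover have "0 \<le> \<bar>g x\<bar> * \<bar>\<phi> x\<bar>" by simp
    ultimately have "\<bar>g x\<bar> * \<bar>\<phi> x\<bar> \<le> (g x)^2 + (\<phi> x)^2" by linarith
    then show "norm (g x * \<phi> x) \<le> norm ((g x)^2 + (\<phi> x)^2)"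
      by (simp add: abs_mult)
  qed
  show "(\<lambda>x. g x * \<phi> x) \<in> borel_measurable lborel"
    using assms borel_measurable_continuous_onI[OF smooth_continuous_on, of \<phi>]
    by (auto simp: L2_def test_fun_def)
qed

lemma AE_eq_of_test_fun_integrals_eq:
  fixes g F :: "real \<Rightarrow> real"
  assumes g: "L2 g" and F: "continuous_on UNIV F"
    and eq: "\<And>\<phi>. test_fun \<phi> \<Longrightarrow> (LINT x|lborel. g x * \<phi> x) = (LINT x|lborel. F x * \<phi> x)"
  shows "AE x in lborel. g x = F x"
proof -
  have [measurable]: "g \<in> borel_measurable lborel" using g by (simp add: L2_def)
  have [measurable]: "F \<in> borel_measurable lborel" using borel_measurable_continuous_onI[OF F] by simp
  have "AE x in lborel. g x - F x = 0"
  proof (rule AE_zero_of_test_fun_integrals_zero)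
    fix a b
    have "integrable lborel (\<lambda>x. g x * indicator {a..b} x - F x * indicator {a..b} x)"
      using g F unfolding L2_def
      by (intro Bochner_Integration.integrable_diff integrable_mult_indicator_of_square_integrable
          borel_integrable_atLeastAtMost) (auto intro: continuous_on_interior)
    then show "integrable lborel (\<lambda>x. (g x - F x) * indicator {a..b} x)"
      by (simp add: left_diff_distrib)
  next
    fix \<phi> assume \<phi>: "test_fun \<phi>"
    have "(LINT x|lborel. (g x - F x) * \<phi> x) = (LINT x|lborel. g x * \<phi> x) - (LINT x|lborel. F x * \<phi> x)"
      by (simp add: left_diff_distrib integrable_square_integrable_mult_test_fun[OF g \<phi>]
          integrable_continuous_mult_test_fun[OF F \<phi>])
    then show "(LINT x|lborel. (g x - F x) * \<phi> x) = 0" using eq[OF \<phi>] by simp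
  qed measurable
  then show ?thesis by simp
qed

lemma L2_add: assumes "L2 f" "L2 g" shows "L2 (\<lambda>x. f x + g x)"
proof -
  have [measurable]: "f \<in> borel_measurable lborel" "g \<in> borel_measurable lborel"
    using assms by (simp_all add: L2_def)
  have "integrable lborel (\<lambda>x. (f x + g x)^2)"
  proof (rule Bochner_Integration.integrable_bound)
    show "integrable lborel (\<lambda>x. 2 * (f x)^2 + 2 * (g x)^2)" using assms by (auto simp: L2_def)
    show "AE x in lborel. norm ((f x + g x)^2) \<le> norm (2 * (f x)^2 + 2 * (g x)^2)"
    proof (rule AE_I2)
      fix x
      have "0 \<le> (f x - g x)^2" by simp
      then have "2 * f x * g x \<le> (f x)^2 + (g x)^2" by (simp add: power2_diff)
      moreover have "0 \<le> (f x + g x)^2" by simp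
      ultimately show "norm ((f x + g x)^2) \<le> norm (2 * (f x)^2 + 2 * (g x)^2)"
        by (simp add: power2_sum)
    qed
  qed measurable
  then show ?thesis by (simp add: L2_def)
qed

lemma L2_minus: "L2 f \<Longrightarrow> L2 (\<lambda>x. - f x)"
  by (simp add: L2_def borel_measurable_uminus)

lemma L2_diff: "L2 f \<Longrightarrow> L2 g \<Longrightarrow> L2 (\<lambda>x. f x - g x)"
  using L2_add[of f "\<lambda>x. - g x"] L2_minus by simp

lemma L2_sum: "(\<And>i. i \<in> A \<Longrightarrow> L2 (f i)) \<Longrightarrow> L2 (\<lambda>x. \<Sum>i\<in>A. f i x)"
proof (induction A rule: infinite_finite_induct)
  case (insert a A)
  then show ?case by (simp add: L2_add)
qed (simp_all add: L2_def)

lemma L2_mult_bounded: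
  assumes "L2 f" and [measurable]: "u \<in> borel_measurable lborel" and "\<And>x. \<bar>u x\<bar> \<le> M"
  shows "L2 (\<lambda>x. u x * f x)"
proof -
  have [measurable]: "f \<in> borel_measurable lborel" using assms(1) by (simp add: L2_def)
  have "integrable lborel (\<lambda>x. (u x * f x)^2)"
  proof (rule Bochner_Integration.integrable_bound)
    show "integrable lborel (\<lambda>x. M^2 * (f x)^2)" using assms(1) by (auto simp: L2_def)
    show "AE x in lborel. norm ((u x * f x)^2) \<le> norm (M^2 * (f x)^2)"
    proof (rule AE_I2)
      fix x
      have "(u x)^2 \<le> M^2" using power_mono[OF assms(3) abs_ge_zero, of x 2] by simp
      then show "norm ((u x * f x)^2) \<le> norm (M^2 * (f x)^2)"
        by (simp add: power_mult_distrib mult_right_mono)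
    qed
  qed measurable
  then show ?thesis by (simp add: L2_def)
qed

lemma sobolev_smooth_iff:
  assumes F: "smooth F"
  shows "sobolev k F \<longleftrightarrow> (\<forall>j\<le>k. L2 ((deriv ^^ j) F))"
proof
  assume "sobolev k F"
  then obtain g where g: "\<And>j. j \<le> k \<Longrightarrow> L2 (g j)"
    and weak: "\<And>j \<phi>. j \<le> k \<Longrightarrow> test_fun \<phi> \<Longrightarrow>
        (LINT x|lborel. g j x * \<phi> x) = (-1)^j * (LINT x|lborel. F x * (deriv ^^ j) \<phi> x)"
    unfolding sobolev_def by blast
  show "\<forall>j\<le>k. L2 ((deriv ^^ j) F)"
  proof (intro allI impI)
    fix j assume "j \<le> k"
    have [measurable]: "(deriv ^^ j) F \<in> borel_measurable lborel"
      using borel_measurable_continuous_onI[OF smooth_continuous_on[OF smooth_higher_deriv[OF F]]]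
      by simp
    have "AE x in lborel. g j x = (deriv ^^ j) F x"
    proof (rule AE_eq_of_test_fun_integrals_eq[OF g[OF \<open>j \<le> k\<close>]])
      show "continuous_on UNIV ((deriv ^^ j) F)"
        by (rule smooth_continuous_on[OF smooth_higher_deriv[OF F]])
      fix \<phi> :: "real \<Rightarrow> real" assume "test_fun \<phi>"
      then show "(LINT x|lborel. g j x * \<phi> x) = (LINT x|lborel. (deriv ^^ j) F x * \<phi> x)"
        using weak[OF \<open>j \<le> k\<close>] integration_by_parts_higher_test_fun[OF F, of \<phi> j] by simp
    qed
    then have ae: "AE x in lborel. (g j x)^2 = ((deriv ^^ j) F x)^2" by eventually_elim simp
    have "integrable lborel (\<lambda>x. (g j x)^2)" using g[OF \<open>j \<le> k\<close>] by (simp add: L2_def)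
    then have "integrable lborel (\<lambda>x. ((deriv ^^ j) F x)^2)"
      by (rule integrable_cong_AE_imp[OF _ _ ae]) measurable
    then show "L2 ((deriv ^^ j) F)" by (simp add: L2_def)
  qed
next
  assume "\<forall>j\<le>k. L2 ((deriv ^^ j) F)"
  then show "sobolev k F"
    unfolding sobolev_def using integration_by_parts_higher_test_fun[OF F]
    by (intro exI[of _ "\<lambda>j. (deriv ^^ j) F"]) auto
qed

lemma bounded_of_L2_deriv:
  assumes F: "smooth F" and "L2 F" and "L2 (deriv F)"
  obtains M where "\<And>x. \<bar>F x\<bar> \<le> M"
proof -
  define G where "G x = (F x)^2 + (deriv F x)^2" for x
  have G_int: "integrable lborel G" using assms(2,3) unfolding L2_def G_def by auto
  have G_cont: "continuous_on UNIV G"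
    unfolding G_def[abs_def] by (intro continuous_intros smooth_continuous_on F smooth_deriv)
  have G_nonneg: "0 \<le> G x" for x by (simp add: G_def)
  have G_le: "integral {a..b} G \<le> (LINT x|lborel. G x)" for a b
  proof -
    have si: "set_integrable lborel {a..b} G"
      using G_int unfolding set_integrable_def by (intro integrable_mult_indicator) auto
    then have "integral {a..b} G = (LINT x:{a..b}|lborel. G x)"
      by (simp add: set_borel_integral_eq_integral(2))
    also have "\<dots> \<le> (LINT x|lborel. G x)"
      using si G_int unfolding set_lebesgue_integral_def set_integrable_def
      by (intro integral_mono) (auto simp: indicator_def G_nonneg)
    finally show ?thesis .
  qed
  \<comment> \<open>\<open>(F b)\<^sup>2 - (F a)\<^sup>2 = \<integral>\<^sub>a\<^sup>b 2 F F'\<close> and \<open>\<bar>2 F F'\<bar> \<le> G\<close>.\<close>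
  have sq_diff_bound: "\<bar>(F b)^2 - (F a)^2\<bar> \<le> (LINT x|lborel. G x)" if "a \<le> b" for a b
  proof -
    have dF2: "((\<lambda>x. (F x)^2) has_real_derivative 2 * F x * deriv F x) (at x)" for x
      using DERIV_mult[OF smooth_has_real_derivative[OF F] smooth_has_real_derivative[OF F], of x]
      by (simp add: power2_eq_square mult.assoc)
    have ftc: "((\<lambda>t. 2 * F t * deriv F t) has_integral (F b)^2 - (F a)^2) {a..b}"
      using that by (intro fundamental_theorem_of_calculus)
        (auto intro!: has_vector_derivative_at_within dF2[unfolded has_real_derivative_iff_has_vector_derivative])
    have "norm (integral {a..b} (\<lambda>t. 2 * F t * deriv F t)) \<le> integral {a..b} G"
    proof (rule integral_norm_bound_integral)
      show "G integrable_on {a..b}"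
        by (rule integrable_continuous_interval[OF continuous_on_subset[OF G_cont]]) simp
      fix t
      have "0 \<le> (\<bar>F t\<bar> - \<bar>deriv F t\<bar>)^2" by simp
      then show "norm (2 * F t * deriv F t) \<le> G t" by (simp add: G_def power2_diff abs_mult)
    qed (use ftc in blast)
    then show ?thesis using G_le[of a b] ftc by (simp add: integral_unique)
  qed
  have "(F x)^2 \<le> (F 0)^2 + (LINT x|lborel. G x)" for x
    using sq_diff_bound[of 0 x] sq_diff_bound[of x 0] by (cases "0 \<le> x") auto
  then show ?thesis
    using that[of "sqrt ((F 0)^2 + (LINT x|lborel. G x))"] by (metis real_sqrt_abs real_sqrt_le_mono)
qed

lemma L2_higher_deriv_mult:
  assumes u: "smooth u" and v: "smooth v"
    and u_bounded: "\<And>j. \<exists>M. \<forall>x. \<bar>(deriv ^^ j) u x\<bar> \<le> M" and v_L2: "\<And>j. L2 ((deriv ^^ j) v)"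
  shows "L2 ((deriv ^^ n) (\<lambda>x. u x * v x))"
proof -
  have "L2 (\<lambda>x. real (n choose i) * (deriv ^^ i) u x * (deriv ^^ (n - i)) v x)" for i
  proof -
    obtain M where M: "\<And>x. \<bar>(deriv ^^ i) u x\<bar> \<le> M" using u_bounded by blast
    have "L2 (\<lambda>x. (real (n choose i) * (deriv ^^ i) u x) * (deriv ^^ (n - i)) v x)"
    proof (rule L2_mult_bounded[OF v_L2])
      show "(\<lambda>x. real (n choose i) * (deriv ^^ i) u x) \<in> borel_measurable lborel"
        using borel_measurable_continuous_onI[OF smooth_continuous_on[OF smooth_higher_deriv[OF u]]]
        by simp
      show "\<bar>real (n choose i) * (deriv ^^ i) u x\<bar> \<le> real (n choose i) * M" for x
        using M by (simp add: abs_mult mult_left_mono)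
    qed
    then show ?thesis by (simp add: mult.assoc)
  qed
  then have "L2 (\<lambda>x. \<Sum>i = 0..n. real (n choose i) * (deriv ^^ i) u x * (deriv ^^ (n - i)) v x)"
    by (rule L2_sum)
  then show ?thesis by (simp add: higher_deriv_mult_smooth[OF u v, abs_def])
qed

lemma phase_bounds_of_cos_nonneg:
  fixes f :: "real \<Rightarrow> real"
  assumes cont: "continuous_on UNIV f" and f0: "f 0 = 0" and cos_nonneg: "\<And>x. cos (f x) \<ge> 0"
  shows "- (pi / 2) \<le> f x \<and> f x \<le> pi / 2"
proof (rule ccontr)
  assume out: "\<not> (- (pi / 2) \<le> f x \<and> f x \<le> pi / 2)"
  define v where "v = max (- pi) (min pi (f x))"
  have conn: "connected (range f)" by (rule connected_continuous_image[OF cont connected_UNIV])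
  have ends: "0 \<in> range f" "f x \<in> range f" using f0 by (metis rangeI)+
  have between: "w \<in> range f" if "min 0 (f x) \<le> w" "w \<le> max 0 (f x)" for w
    using that connectedD_interval[OF conn ends] connectedD_interval[OF conn ends(2,1)]
    by (cases "0 \<le> f x") auto
  have "v \<in> range f" by (intro between) (use pi_gt_zero in \<open>auto simp: v_def max_def min_def simp del: pi_gt_zero\<close>)
  moreover have "pi / 2 < \<bar>v\<bar>" "\<bar>v\<bar> < 3 * pi / 2"
    using out pi_gt_zero by (auto simp: v_def max_def min_def simp del: pi_gt_zero)
  then have "cos v < 0" using cos_lt_zero_pi[of "\<bar>v\<bar>"] by simp
  ultimately show False using cos_nonneg by (metis image_iff not_le)
qed

lemma phase_mono_on_nonneg:
  fixes f :: "real \<Rightarrow> real"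
  assumes cont: "continuous_on UNIV f" and f0: "f 0 = 0"
    and bounds: "\<And>x. - (pi / 2) \<le> f x \<and> f x \<le> pi / 2"
    and cos_antimono: "\<And>x y. 0 \<le> x \<Longrightarrow> x \<le> y \<Longrightarrow> cos (f y) \<le> cos (f x)"
    and sin_lim: "((\<lambda>x. sin (f x)) \<longlongrightarrow> 1) at_top"
  shows "\<And>x. 0 \<le> x \<Longrightarrow> 0 \<le> f x" and "\<And>x y. 0 \<le> x \<Longrightarrow> x \<le> y \<Longrightarrow> f x \<le> f y"
proof -
  have abs_mono: "\<bar>f x\<bar> \<le> \<bar>f y\<bar>" if "0 \<le> x" "x \<le> y" for x y
  proof -
    have "\<bar>f x\<bar> \<le> pi" "\<bar>f y\<bar> \<le> pi" using bounds[of x] bounds[of y] pi_gt_zero by linarith+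
    then show ?thesis using cos_antimono[OF that] cos_mono_le_eq[of "\<bar>f y\<bar>" "\<bar>f x\<bar>"] by simp
  qed
  show nonneg: "0 \<le> f x" if "0 \<le> x" for x
  proof (rule ccontr)
    assume neg: "\<not> 0 \<le> f x"
    \<comment> \<open>A zero of \<open>f\<close> to the right of \<open>x\<close> would contradict \<open>\<bar>f x\<bar> \<le> \<bar>f z\<bar>\<close>.\<close>
    have neg_right: "f y < 0" if "x \<le> y" for y
    proof (rule ccontr)
      assume "\<not> f y < 0"
      then obtain z where "x \<le> z" "z \<le> y" "f z = 0"
        using IVT'[of f x 0 y] neg \<open>x \<le> y\<close> continuous_on_subset[OF cont] by force
      then show False using abs_mono[of x z] \<open>0 \<le> x\<close> neg by auto
    qed
    have "\<forall>\<^sub>F y in at_top. sin (f y) \<le> 0"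
      unfolding eventually_at_top_linorder
    proof (intro exI allI impI)
      fix y assume "x \<le> y"
      then have "0 \<le> sin (- f y)" using neg_right[of y] bounds[of y] by (intro sin_ge_zero) auto
      then show "sin (f y) \<le> 0" by simp
    qed
    from tendsto_upperbound[OF sin_lim this] show False by simp
  qed
  show "f x \<le> f y" if "0 \<le> x" "x \<le> y" for x y
    using abs_mono[OF that] nonneg[of x] nonneg[of y] that by auto
qed

lemma phase_mono:
  fixes f :: "real \<Rightarrow> real"
  assumes cont: "continuous_on UNIV f" and f0: "f 0 = 0"
    and bounds: "\<And>x. - (pi / 2) \<le> f x \<and> f x \<le> pi / 2"
    and cos_even: "\<And>x. cos (f (- x)) = cos (f x)"
    and cos_antimono: "\<And>x y. 0 \<le> x \<Longrightarrow> x \<le> y \<Longrightarrow> cos (f y) \<le> cos (f x)"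
    and sin_lim_top: "((\<lambda>x. sin (f x)) \<longlongrightarrow> 1) at_top"
    and sin_lim_bot: "((\<lambda>x. sin (f x)) \<longlongrightarrow> -1) at_bot"
  shows "mono f"
proof -
  note right = phase_mono_on_nonneg[OF cont f0 bounds cos_antimono sin_lim_top]
  define g where "g x = - f (- x)" for x
  have "((\<lambda>x. - sin (f (- x))) \<longlongrightarrow> 1) at_top"
    using tendsto_minus[OF sin_lim_bot[unfolded filterlim_at_bot_mirror]] by simp
  then have g_lim: "((\<lambda>x. sin (g x)) \<longlongrightarrow> 1) at_top" by (simp add: g_def)
  have g_cont: "continuous_on UNIV g"
    unfolding g_def[abs_def] by (intro continuous_intros continuous_on_compose2[OF cont]) auto
  have g_bounds: "- (pi / 2) \<le> g x \<and> g x \<le> pi / 2" for x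
    using bounds[of "- x"] by (auto simp: g_def)
  have g_antimono: "cos (g y) \<le> cos (g x)" if "0 \<le> x" "x \<le> y" for x y
    using cos_antimono[OF that] cos_even by (simp add: g_def)
  have "g 0 = 0" using f0 by (simp add: g_def)
  note left = phase_mono_on_nonneg[OF g_cont this g_bounds g_antimono g_lim]
  show "mono f"
  proof
    fix x y :: real assume "x \<le> y"
    consider "0 \<le> x" | "y \<le> 0" | "x < 0" "0 < y" by linarith
    then show "f x \<le> f y"
    proof cases
      case 2 then show ?thesis using left(2)[of "- y" "- x"] \<open>x \<le> y\<close> by (simp add: g_def)
    next
      case 3 then show ?thesis using left(1)[of "- x"] right(1)[of y] by (simp add: g_def)
    qed (use right(2) \<open>x \<le> y\<close> in blast)
  qed
qed

lemma tendsto_of_tendsto_sin: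
  fixes f :: "'a \<Rightarrow> real"
  assumes bounds: "\<And>x. - (pi / 2) \<le> f x \<and> f x \<le> pi / 2"
    and lim: "((\<lambda>x. sin (f x)) \<longlongrightarrow> l) F" and "- 1 \<le> l" "l \<le> 1"
  shows "(f \<longlongrightarrow> arcsin l) F"
proof -
  have "((\<lambda>x. arcsin (sin (f x))) \<longlongrightarrow> arcsin l) F"
    by (rule continuous_on_tendsto_compose[OF continuous_on_arcsin' lim]) (use assms in auto)
  then show ?thesis using bounds by (simp add: arcsin_sin)
qed

text \<open>On \<open>[-pi/2, pi/2]\<close> the phase is recovered from \<open>(cos f, sin f)\<close> by the half-angle formula
  \<open>f = 2 arctan (sin f / (1 + cos f))\<close>, which is differentiable since \<open>1 + cos f \<ge> 1\<close>.\<close>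

lemma phase_has_real_derivative:
  fixes f :: "real \<Rightarrow> real"
  assumes bounds: "\<And>x. - (pi / 2) \<le> f x \<and> f x \<le> pi / 2"
    and C: "((\<lambda>x. cos (f x)) has_real_derivative C') (at x)"
    and S: "((\<lambda>x. sin (f x)) has_real_derivative S') (at x)"
  shows "(f has_real_derivative cos (f x) * S' - sin (f x) * C') (at x)"
proof -
  let ?c = "cos (f x)" and ?s = "sin (f x)"
  have half_angle: "f y = 2 * arctan (sin (f y) / (1 + cos (f y)))" for y
    using bounds[of y] arctan_tan[of "f y / 2"] tan_half[of "f y / 2"] pi_gt_zero
    by (simp add: add.commute)
  have c_pos: "1 + ?c > 0" using cos_ge_zero bounds by (simp add: add_pos_nonneg)
  have "((\<lambda>x. cos (f x) * cos (f x) + sin (f x) * sin (f x)) has_real_derivative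
      C' * ?c + C' * ?c + (S' * ?s + S' * ?s)) (at x)"
    using DERIV_add[OF DERIV_mult[OF C C] DERIV_mult[OF S S]] .
  then have "((\<lambda>x. 1) has_real_derivative C' * ?c + C' * ?c + (S' * ?s + S' * ?s)) (at x)"
    by (simp add: sin_cos_squared_add3)
  from DERIV_unique[OF this DERIV_const] have orth: "?c * C' + ?s * S' = 0"
    by (simp add: algebra_simps)
  have "((\<lambda>x. 2 * arctan (sin (f x) / (1 + cos (f x)))) has_real_derivative
      2 * (inverse (1 + (?s / (1 + ?c))^2) * ((S' * (1 + ?c) - ?s * (0 + C')) / ((1 + ?c) * (1 + ?c)))))
      (at x)"
    using c_pos by (intro DERIV_cmult DERIV_chain2[OF DERIV_arctan] DERIV_divide DERIV_add DERIV_const C S) auto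
  also have "2 * (inverse (1 + (?s / (1 + ?c))^2) * ((S' * (1 + ?c) - ?s * (0 + C')) / ((1 + ?c) * (1 + ?c))))
      = ?c * S' - ?s * C'"
  proof -
    have "2 * (inverse (1 + (s / (1 + c))^2) * ((S' * (1 + c) - s * (0 + C')) / ((1 + c) * (1 + c))))
        = c * S' - s * C'" if "0 < 1 + c" "c^2 + s^2 = 1" "c * C' + s * S' = 0" for c s :: real
    proof -
      have "1 + (s / (1 + c))^2 = 2 / (1 + c)"
        using that(1,2) by (simp add: divide_simps) algebra
      moreover have "S' * (1 + c) - s * C' = (1 + c) * (c * S' - s * C')"
        using that(2,3) by algebra
      ultimately show ?thesis using that(1) by (simp add: divide_simps)
    qed
    then show ?thesis using c_pos sin_cos_squared_add2 orth by blast
  qed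
  finally have "((\<lambda>x. 2 * arctan (sin (f x) / (1 + cos (f x)))) has_real_derivative
      ?c * S' - ?s * C') (at x)" .
  then show ?thesis
    by (rule has_field_derivative_transform_within_open[where S=UNIV]) (simp_all flip: half_angle)
qed

text \<open>Uniqueness for \<open>f'' = O(q f)\<close> with locally integrable \<open>q\<close>: on \<open>[b, b + \<delta>]\<close> we have
  \<open>\<bar>f\<bar> \<le> M \<delta>\<close> with \<open>M = max \<bar>f'\<bar>\<close>, hence \<open>\<bar>f'\<bar> \<le> M \<delta> \<integral> q\<close>, and \<open>\<delta> \<integral> q < 1\<close> forces \<open>M = 0\<close>.\<close>

lemma vanishes_right_of_double_zero:
  fixes f q :: "real \<Rightarrow> real"
  assumes f: "smooth f" and q_nonneg: "\<And>x. 0 \<le> q x" and q_int: "q integrable_on {b..b+1}"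
    and bound: "\<And>x. \<bar>deriv (deriv f) x\<bar> \<le> q x * \<bar>f x\<bar>"
    and fb: "f b = 0" and dfb: "deriv f b = 0"
  shows "\<exists>\<delta>>0. \<forall>t\<in>{b..b+\<delta>}. f t = 0"
proof -
  define Q where "Q = integral {b..b+1} q"
  have "Q \<ge> 0" unfolding Q_def using q_nonneg q_int by (simp add: integral_nonneg)
  define \<delta> where "\<delta> = 1 / (Q + 2)"
  have \<delta>: "\<delta> > 0" "\<delta> \<le> 1" "\<delta> * Q < 1" using \<open>Q \<ge> 0\<close> unfolding \<delta>_def by (auto simp: field_simps)
  obtain t0 where t0: "t0 \<in> {b..b+\<delta>}" and t0_max: "\<And>t. t \<in> {b..b+\<delta>} \<Longrightarrow> \<bar>deriv f t\<bar> \<le> \<bar>deriv f t0\<bar>"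
  proof -
    have "continuous_on {b..b+\<delta>} (\<lambda>t. \<bar>deriv f t\<bar>)"
      using smooth_continuous_on[OF smooth_deriv[OF f]] by (intro continuous_on_rabs)
    from continuous_attains_sup[OF compact_Icc _ this] \<delta> that show ?thesis by auto
  qed
  define M where "M = \<bar>deriv f t0\<bar>"
  have "M \<ge> 0" unfolding M_def by simp
  have f_bound: "\<bar>f t\<bar> \<le> M * \<delta>" if "t \<in> {b..b+\<delta>}" for t
  proof (cases "t = b")
    case True
    then show ?thesis using fb \<open>M \<ge> 0\<close> \<delta>(1) by simp
  next
    case False
    then have "b < t" using that by auto
    obtain z where z: "b < z" "z < t" "f t - f b = (t - b) * deriv f z"
      using MVT2[OF \<open>b < t\<close>, of f "deriv f"] smooth_has_real_derivative[OF f] by metis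
    have "\<bar>deriv f z\<bar> \<le> M" unfolding M_def using t0_max[of z] z that by auto
    then have "\<bar>f t\<bar> \<le> (t - b) * M" using z fb by (simp add: abs_mult mult_left_mono)
    also have "\<dots> \<le> \<delta> * M" using that \<open>M \<ge> 0\<close> by (intro mult_right_mono) auto
    finally show ?thesis by (simp add: mult.commute)
  qed
  have "\<bar>deriv f t\<bar> \<le> M * \<delta> * Q" if t: "t \<in> {b..b+\<delta>}" for t
  proof -
    have ftc: "(deriv (deriv f) has_integral deriv f t - deriv f b) {b..t}"
      using t by (intro fundamental_theorem_of_calculus) (auto intro!: has_vector_derivative_at_within
          smooth_has_real_derivative[OF smooth_deriv[OF f], unfolded has_real_derivative_iff_has_vector_derivative])
    have q_int_t: "q integrable_on {b..t}"
      by (rule integrable_subinterval_real[OF q_int]) (use t \<delta> in auto)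
    have "norm (integral {b..t} (deriv (deriv f))) \<le> integral {b..t} (\<lambda>s. M * \<delta> * q s)"
    proof (rule integral_norm_bound_integral)
      show "deriv (deriv f) integrable_on {b..t}" using ftc by blast
      show "(\<lambda>s. M * \<delta> * q s) integrable_on {b..t}" using integrable_on_cmult_left[OF q_int_t] by simp
      fix s assume "s \<in> {b..t}"
      then have "\<bar>f s\<bar> \<le> M * \<delta>" using t by (intro f_bound) auto
      then have "q s * \<bar>f s\<bar> \<le> q s * (M * \<delta>)" using q_nonneg[of s] by (rule mult_left_mono)
      then show "norm (deriv (deriv f) s) \<le> M * \<delta> * q s" using bound[of s] by (simp add: mult.commute)
    qed
    also have "\<dots> = M * \<delta> * integral {b..t} q" by simp
    also have "\<dots> \<le> M * \<delta> * Q" unfolding Q_def using \<open>M \<ge> 0\<close> \<delta> q_int_t q_int q_nonneg t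
      by (intro mult_left_mono integral_subset_le) auto
    finally show ?thesis using ftc dfb by (simp add: integral_unique)
  qed
  then have "M * (1 - \<delta> * Q) \<le> 0" using t0 unfolding M_def by (simp add: algebra_simps)
  then have "M = 0" using \<open>M \<ge> 0\<close> \<delta>(3) by (simp add: mult_le_0_iff)
  then show ?thesis using \<delta>(1) f_bound by force
qed

lemma deriv_pos_at_zero_of_mono:
  fixes f q :: "real \<Rightarrow> real"
  assumes f: "smooth f" and mono: "mono f" and f0: "f 0 = 0" and pos: "\<forall>\<^sub>F x in at_top. f x > 0"
    and q_nonneg: "\<And>x. 0 \<le> q x" and q_int: "\<And>a b. q integrable_on {a..b}"
    and bound: "\<And>x. \<bar>deriv (deriv f) x\<bar> \<le> q x * \<bar>f x\<bar>"
  shows "deriv f 0 > 0"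
proof (rule ccontr)
  have deriv_nonneg: "deriv f x \<ge> 0" for x
    using mono_on_imp_deriv_nonneg[of UNIV f] mono smooth_has_real_derivative[OF f] by auto
  assume "\<not> deriv f 0 > 0"
  then have df0: "deriv f 0 = 0" using deriv_nonneg[of 0] by simp
  \<comment> \<open>The last zero \<open>b\<close> of \<open>f\<close> is a double zero, so \<open>f\<close> vanishes a little beyond it.\<close>
  define Z where "Z = {x. 0 \<le> x \<and> f x = 0}"
  have Z_iff: "x \<in> Z \<longleftrightarrow> 0 \<le> x \<and> f x = 0" for x by (simp add: Z_def)
  obtain X where X: "\<And>x. x \<ge> X \<Longrightarrow> f x > 0" using pos unfolding eventually_at_top_linorder by blast
  have Z_bdd: "bdd_above Z" unfolding bdd_above_def
  proof (intro exI[of _ X] ballI)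
    fix x assume "x \<in> Z"
    then show "x \<le> X" using X[of x] by (force simp: Z_iff)
  qed
  have "Z = {0..} \<inter> f -` {0}" unfolding Z_def by auto
  then have "closed Z" using smooth_continuous_on[OF f] by (auto intro!: closed_Int closed_vimage)
  moreover have "Z \<noteq> {}" using f0 Z_iff by blast
  ultimately have "Sup Z \<in> Z" using Z_bdd by (intro closed_contains_Sup)
  then have b: "0 \<le> Sup Z" "f (Sup Z) = 0" by (simp_all add: Z_iff)
  have "deriv f (Sup Z) = 0"
  proof (cases "Sup Z = 0")
    case False
    have "f (Sup Z) \<le> f y" if "\<bar>Sup Z - y\<bar> < Sup Z" for y
    proof -
      have "0 \<le> y" using that by (simp add: abs_less_iff)
      then show ?thesis using monoD[OF mono \<open>0 \<le> y\<close>] f0 b by simp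
    qed
    moreover have "0 < Sup Z" using b False by simp
    ultimately show ?thesis using DERIV_local_min[OF smooth_has_real_derivative[OF f]] by blast
  qed (use df0 in simp)
  with f q_nonneg q_int bound b(2) have "\<exists>\<delta>>0. \<forall>t\<in>{Sup Z..Sup Z + \<delta>}. f t = 0"
    by (rule vanishes_right_of_double_zero)
  then obtain \<delta> where \<delta>: "\<delta> > 0" "\<forall>t\<in>{Sup Z..Sup Z + \<delta>}. f t = 0" by auto
  have "Sup Z + \<delta> \<in> Z" using b \<delta> by (simp add: Z_iff)
  from cSup_upper[OF this Z_bdd] show False using \<open>\<delta> > 0\<close> by simp
qed

lemma second_deriv_bound_of_phase_equation:
  fixes \<theta> :: "real \<Rightarrow> real" and h :: "real \<Rightarrow> complex"
  assumes "\<kappa> > 0" "\<epsilon> > 0"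
    and EL: "\<kappa> * deriv (deriv \<theta>) x + sin (2 * \<theta> x) / 2 + (1 / \<epsilon>) * Re (h x) * sin (\<theta> x) = 0"
  shows "\<bar>deriv (deriv \<theta>) x\<bar> \<le> (1 + cmod (h x) / \<epsilon>) / \<kappa> * \<bar>\<theta> x\<bar>"
proof -
  have sin_le: "\<bar>sin (\<theta> x)\<bar> \<le> \<bar>\<theta> x\<bar>" by (rule abs_sin_x_le_abs_x)
  have "\<kappa> * deriv (deriv \<theta>) x = - (sin (\<theta> x) * cos (\<theta> x) + Re (h x) * sin (\<theta> x) / \<epsilon>)"
    using EL sin_double[of "\<theta> x"] by (simp add: algebra_simps)
  then have "\<kappa> * \<bar>deriv (deriv \<theta>) x\<bar> = \<bar>sin (\<theta> x) * cos (\<theta> x) + Re (h x) * sin (\<theta> x) / \<epsilon>\<bar>"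
    using \<open>\<kappa> > 0\<close> by (metis abs_minus_cancel abs_mult abs_of_pos)
  also have "\<dots> \<le> \<bar>sin (\<theta> x) * cos (\<theta> x)\<bar> + \<bar>Re (h x) * sin (\<theta> x) / \<epsilon>\<bar>"
    by (rule abs_triangle_ineq)
  also have "\<dots> \<le> \<bar>\<theta> x\<bar> + cmod (h x) * \<bar>\<theta> x\<bar> / \<epsilon>"
  proof (rule add_mono)
    have "\<bar>sin (\<theta> x)\<bar> * \<bar>cos (\<theta> x)\<bar> \<le> \<bar>sin (\<theta> x)\<bar>"
      by (rule mult_left_le[OF abs_cos_le_one abs_ge_zero])
    then show "\<bar>sin (\<theta> x) * cos (\<theta> x)\<bar> \<le> \<bar>\<theta> x\<bar>" using sin_le by (simp add: abs_mult)
    have "\<bar>Re (h x) * sin (\<theta> x)\<bar> \<le> cmod (h x) * \<bar>\<theta> x\<bar>"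
      unfolding abs_mult by (rule mult_mono[OF abs_Re_le_cmod sin_le]) auto
    then show "\<bar>Re (h x) * sin (\<theta> x) / \<epsilon>\<bar> \<le> cmod (h x) * \<bar>\<theta> x\<bar> / \<epsilon>"
      using \<open>\<epsilon> > 0\<close> by (simp add: divide_right_mono)
  qed
  finally show ?thesis using \<open>\<kappa> > 0\<close> \<open>\<epsilon> > 0\<close> by (simp add: field_simps)
qed

lemma sobolev_phase_deriv:
  fixes C S :: "real \<Rightarrow> real"
  assumes C: "smooth C" and S: "smooth S" and S_bounded: "\<And>x. \<bar>S x\<bar> \<le> 1"
    and sobolev: "\<And>k. sobolev k C" "\<And>k. sobolev k (deriv S)"
  shows "sobolev k (\<lambda>x. C x * deriv S x - S x * deriv C x)"
proof -
  have C_L2: "L2 ((deriv ^^ j) C)" and S'_L2: "L2 ((deriv ^^ j) (deriv S))" for j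
    using sobolev sobolev_smooth_iff[OF C] sobolev_smooth_iff[OF smooth_deriv[OF S]] by blast+
  have C'_L2: "L2 ((deriv ^^ j) (deriv C))" for j
    using C_L2[of "Suc j"] by (simp only: funpow_deriv_Suc)
  have bounded_of_L2: "\<exists>M. \<forall>x. \<bar>(deriv ^^ j) F x\<bar> \<le> M"
    if "smooth F" "\<And>j. L2 ((deriv ^^ j) F)" for F j
    using bounded_of_L2_deriv[OF smooth_higher_deriv[OF \<open>smooth F\<close>] that(2)[of j]] that(2)[of "Suc j"]
    by (metis funpow_deriv_Suc funpow_swap1)
  have S_bounded_derivs: "\<exists>M. \<forall>x. \<bar>(deriv ^^ j) S x\<bar> \<le> M" for j
  proof (cases j)
    case (Suc i)
    then show ?thesis using bounded_of_L2[OF smooth_deriv[OF S] S'_L2, of i]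
      by (simp only: funpow_deriv_Suc)
  qed (use S_bounded in auto)
  have "L2 ((deriv ^^ n) (\<lambda>x. C x * deriv S x - S x * deriv C x))" for n
    using L2_diff[OF L2_higher_deriv_mult[OF C smooth_deriv[OF S] bounded_of_L2[OF C C_L2] S'_L2]
        L2_higher_deriv_mult[OF S smooth_deriv[OF C] S_bounded_derivs C'_L2]]
    by (simp add: higher_deriv_diff_smooth smooth_mult smooth_deriv C S)
  then show ?thesis
    by (simp add: sobolev_smooth_iff smooth_diff smooth_mult smooth_deriv C S)
qed

lemma integrable_on_cmod_of_L2c:
  assumes "L2c h" shows "(\<lambda>x. cmod (h x)) integrable_on {a..b}"
proof -
  have "integrable lborel (\<lambda>x. cmod (h x) * indicator {a..b} x)"
    using assms by (intro integrable_mult_indicator_of_square_integrable) (auto simp: L2c_def)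
  then have "set_integrable lborel {a..b} (\<lambda>x. cmod (h x))"
    by (simp add: set_integrable_def mult.commute)
  then show ?thesis by (rule set_borel_integral_eq_integral(1))
qed

lemma deriv_pos_at_zero_of_phase_equation:
  fixes \<theta> :: "real \<Rightarrow> real" and h :: "real \<Rightarrow> complex"
  assumes "\<kappa> > 0" "\<epsilon> > 0" and "L2c h"
    and EL: "\<And>x. \<kappa> * deriv (deriv \<theta>) x + sin (2 * \<theta> x) / 2 + (1 / \<epsilon>) * Re (h x) * sin (\<theta> x) = 0"
    and "smooth \<theta>" "mono \<theta>" "\<theta> 0 = 0" and lim: "(\<theta> \<longlongrightarrow> pi / 2) at_top"
  shows "deriv \<theta> 0 > 0"
proof (rule deriv_pos_at_zero_of_mono[OF \<open>smooth \<theta>\<close> \<open>mono \<theta>\<close> \<open>\<theta> 0 = 0\<close>])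
  show "\<forall>\<^sub>F x in at_top. \<theta> x > 0" using lim by (rule order_tendstoD) simp
  show "(\<lambda>x. (1 + cmod (h x) / \<epsilon>) / \<kappa>) integrable_on {a..b}" for a b
    by (intro integrable_on_divide Henstock_Kurzweil_Integration.integrable_add integrable_on_const
        integrable_on_cmod_of_L2c[OF \<open>L2c h\<close>]) auto
  show "0 \<le> (1 + cmod (h x) / \<epsilon>) / \<kappa>" for x using assms(1,2) by simp
  show "\<bar>deriv (deriv \<theta>) x\<bar> \<le> (1 + cmod (h x) / \<epsilon>) / \<kappa> * \<bar>\<theta> x\<bar>" for x
    by (rule second_deriv_bound_of_phase_equation[OF assms(1,2) EL])
qed

theorem lemma2:
  fixes \<kappa> \<epsilon> :: real and m :: "real \<Rightarrow> real \<times> real" and \<theta> :: "real \<Rightarrow> real"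
  assumes kappa_pos: "\<kappa> > 0" and eps_pos: "\<epsilon> > 0"
    and neel: "neel_wall \<kappa> \<epsilon> m"
    and theta_cont: "continuous_on UNIV \<theta>"
    and theta0: "\<theta> 0 = 0"
    and theta_m: "\<forall>x. m x = (cos (\<theta> x), sin (\<theta> x))"
    \<comment> \<open>standing facts from the literature\<close>
    and m_smooth: "smooth (\<lambda>x. fst (m x)) \<and> smooth (\<lambda>x. snd (m x))"
    and m_sobolev: "\<forall>k. sobolev k (\<lambda>x. fst (m x)) \<and> sobolev k (deriv (\<lambda>x. snd (m x)))"
    and m1_nonneg: "\<forall>x. fst (m x) \<ge> 0"
    and m1_sym_decr: "(\<forall>x. fst (m (- x)) = fst (m x)) \<and>
                      (\<forall>x y. 0 \<le> x \<and> x \<le> y \<longrightarrow> fst (m y) \<le> fst (m x))"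
    and theta_EL: "\<exists>h. S_op \<epsilon> (\<lambda>x. cos (\<theta> x)) h \<and>
        (\<forall>x. \<kappa> * deriv (deriv \<theta>) x + sin (2 * \<theta> x) / 2
              + (1 / \<epsilon>) * Re (h x) * sin (\<theta> x) = 0)"
  shows "smooth \<theta> \<and>
         (\<theta> 0 = 0 \<and> (\<forall>x. deriv \<theta> x \<ge> 0) \<and> deriv \<theta> 0 > 0) \<and>
         (\<forall>k. sobolev k (deriv \<theta>) \<and> sobolev k (\<lambda>x. cos (\<theta> x))) \<and>
         ((\<forall>x. - (pi / 2) \<le> \<theta> x \<and> \<theta> x \<le> pi / 2) \<and>
          (\<theta> \<longlongrightarrow> pi / 2) at_top \<and> (\<theta> \<longlongrightarrow> - (pi / 2)) at_bot)"
proof -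
  define C S where "C = (\<lambda>x. cos (\<theta> x))" and "S = (\<lambda>x. sin (\<theta> x))"
  have m_eq: "(\<lambda>x. fst (m x)) = C" "(\<lambda>x. snd (m x)) = S" using theta_m by (auto simp: C_def S_def)
  have C: "smooth C" and S: "smooth S" using m_smooth by (simp_all add: m_eq)
  obtain d where "admissible m d" using neel unfolding neel_wall_def by blast
  then have S_lim: "(S \<longlongrightarrow> 1) at_top" "(S \<longlongrightarrow> -1) at_bot" unfolding admissible_def m_eq by auto
  have bounds: "- (pi / 2) \<le> \<theta> x \<and> \<theta> x \<le> pi / 2" for x
    using phase_bounds_of_cos_nonneg[OF theta_cont theta0] m1_nonneg by (simp add: theta_m)
  define \<psi> where "\<psi> x = C x * deriv S x - S x * deriv C x" for x
  have deriv_theta: "(\<theta> has_real_derivative \<psi> x) (at x)" for x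
    using phase_has_real_derivative[OF bounds smooth_has_real_derivative[OF C[unfolded C_def]]
        smooth_has_real_derivative[OF S[unfolded S_def]]]
    by (simp add: \<psi>_def C_def S_def)
  then have "deriv \<theta> = \<psi>" by (simp add: DERIV_imp_deriv fun_eq_iff)
  have smooth_theta: "smooth \<theta>"
    using deriv_theta by (rule smooth_of_has_real_derivative) (simp add: \<psi>_def[abs_def] smooth_diff
        smooth_mult smooth_deriv C S)
  have "mono \<theta>"
    using phase_mono[OF theta_cont theta0 bounds] m1_sym_decr S_lim by (simp add: theta_m S_def)
  then have deriv_nonneg: "deriv \<theta> x \<ge> 0" for x
    using mono_on_imp_deriv_nonneg[of UNIV \<theta>] deriv_theta \<open>deriv \<theta> = \<psi>\<close> by auto
  have lim_top: "(\<theta> \<longlongrightarrow> pi / 2) at_top" and lim_bot: "(\<theta> \<longlongrightarrow> - (pi / 2)) at_bot"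
    using tendsto_of_tendsto_sin[OF bounds] S_lim by (fastforce simp: S_def)+
  moreover have "deriv \<theta> 0 > 0"
    using theta_EL deriv_pos_at_zero_of_phase_equation[OF kappa_pos eps_pos _ _ smooth_theta
        \<open>mono \<theta>\<close> theta0 lim_top]
    unfolding S_op_def fourier_L2_def by blast
  moreover have "sobolev k (deriv \<theta>) \<and> sobolev k (\<lambda>x. cos (\<theta> x))" for k
    using sobolev_phase_deriv[OF C S] m_sobolev \<open>deriv \<theta> = \<psi>\<close>
    by (auto simp: m_eq \<psi>_def[abs_def] S_def C_def)
  ultimately show ?thesis
    using smooth_theta theta0 deriv_nonneg bounds lim_top lim_bot by blast
qed

end
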